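(* For every odd $k\ge 13$, the set $AP_{3k,k}$ contains an ascending partition $\mathcal P$ with $\mathrm{slack}(\mathcal P)\ge 0$ that is non-equitable; and for every odd $k\ge 21$, the set $AP_{3k-1,k}$ contains an ascending partition $\mathcal P$ with $\mathrm{slack}(\mathcal P)\ge 0$ that is non-equitable.
   Context: $[n]=\{1,\ldots,n\}$ and $s^{n,k}=\frac{n(n+1)}{2k}$. An ascending partition of $n$ of size $k$ is a sequence of positive integers $[p_1,\ldots,p_k]$ with $p_1\le\cdots\le p_k$ and $\sum_i p_i=n$; $AP_{n,k}$ is the set of all such partitions when $s^{n,k}$ is an integer (and empty otherwise). $\mathcal P$ is equitable if $[n]$ can be partitioned into sets $A_1,\dots,A_k$ with $|A_i|=p_i$ all having the same element sum. For $j=1,\ldots,k$, $\mathrm{slack}_j(\mathcal P)=\sum_{i=1}^{p_1+\cdots+p_j}(n-i+1)-j\,s^{n,k}$, and $\mathrm{slack}(\mathcal P)=\min_{1\le j\le k-1}\mathrm{slack}_j(\mathcal P)$. *)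

theory Defs
  imports Complex_Main
begin

definition s_val :: "nat \<Rightarrow> nat \<Rightarrow> rat" where
  "s_val n k = of_nat (n * (n + 1)) / of_nat (2 * k)"

definition AP :: "nat \<Rightarrow> nat \<Rightarrow> nat list set" where
  "AP n k = (if s_val n k \<in> \<int> then
      {P. length P = k \<and> sorted P \<and> (\<forall>x\<in>set P. 0 < x) \<and> sum_list P = n}
    else {})"

definition equitable :: "nat \<Rightarrow> nat list \<Rightarrow> bool" where
  "equitable n P = (\<exists>A :: nat \<Rightarrow> nat set.
      (\<Union>i<length P. A i) = {1..n} \<and>
      (\<forall>i<length P. \<forall>j<length P. i \<noteq> j \<longrightarrow> A i \<inter> A j = {}) \<and>
      (\<forall>i<length P. card (A i) = P ! i) \<and>
      (\<forall>i<length P. \<forall>j<length P. \<Sum>(A i) = \<Sum>(A j)))"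

definition slack_j :: "nat \<Rightarrow> nat list \<Rightarrow> nat \<Rightarrow> rat" where
  "slack_j n P j = (\<Sum>i=1..sum_list (take j P). (of_nat n - of_nat i + 1))
                    - of_nat j * s_val n (length P)"

definition slack :: "nat \<Rightarrow> nat list \<Rightarrow> rat" where
  "slack n P = Min ((slack_j n P) ` {1..length P - 1})"

end

theory Submission
  imports Defs
begin

text \<open>All witnesses consist of \<open>m\<close> parts 2, \<open>t\<close> parts 3, \<open>b\<close> parts 7 and at most
  one larger part, with common part sum \<open>S = n (n + 1) / (2 k)\<close>.

  Non-equitability is a counting argument: a 2-set \<open>{x, y} \<subseteq> [n]\<close> with \<open>x + y = S\<close> lies in
  the top interval \<open>{S - n..n}\<close>, and a 3-set with sum \<open>S\<close> meets it as soon as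
  \<open>3 (S - n) < S + 6\<close>. Hence an equitable split needs \<open>2 m + t\<close> distinct elements of that
  interval, and the witnesses are chosen to have one too few.

  Nonnegative slack: along a block of equal parts \<open>p\<close>, \<open>slack\<^sub>j\<close> is a concave quadratic
  function of \<open>j\<close> (leading coefficient \<open>-p\<^sup>2/2\<close>), so it suffices to check it at the block
  boundaries; at \<open>j = k\<close> it vanishes.\<close>

definition top_sum :: "nat \<Rightarrow> nat \<Rightarrow> rat" where
  "top_sum n L = (\<Sum>i=1..L. of_nat n - of_nat i + 1)"

lemma top_sum_closed: "top_sum n L = of_nat L * of_nat n - of_nat L * (of_nat L - 1) / 2"
  by (induction L) (simp_all add: top_sum_def field_simps)

lemma top_sum_self: "top_sum n n = of_nat n * (of_nat n + 1) / 2"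
  by (simp add: top_sum_closed field_simps)

text \<open>\<open>slack_j\<close> with the average part sum \<open>s\<close> decoupled from \<open>length P\<close>, so that \<open>P\<close> can
  be built up block by block.\<close>
definition prefix_excess :: "nat \<Rightarrow> rat \<Rightarrow> nat list \<Rightarrow> nat \<Rightarrow> rat" where
  "prefix_excess n s P j = top_sum n (sum_list (take j P)) - of_nat j * s"

lemma slack_j_eq_prefix_excess: "slack_j n P j = prefix_excess n (s_val n (length P)) P j"
  by (simp add: slack_j_def prefix_excess_def top_sum_def)

lemma top_sum_excess_interpolate:
  fixes s :: rat
  assumes "i \<le> a"
    and "0 \<le> top_sum n L - of_nat J * s"
    and "0 \<le> top_sum n (L + a * p) - of_nat (J + a) * s"
  shows "0 \<le> top_sum n (L + i * p) - of_nat (J + i) * s"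
proof (cases "a = 0")
  case True
  then show ?thesis using assms by simp
next
  case False
  define f where "f i = top_sum n (L + i * p) - of_nat (J + i) * s" for i
  have "of_nat a * f i = of_nat (a - i) * f 0 + of_nat i * f a
          + of_nat a * of_nat i * of_nat (a - i) * of_nat p ^ 2 / 2"
    using \<open>i \<le> a\<close> by (simp add: f_def top_sum_closed power2_eq_square field_simps)
  also have "0 \<le> \<dots>"
    using assms(2,3) by (simp add: f_def)
  finally have "0 \<le> f i"
    using False by (simp add: zero_le_mult_iff)
  then show ?thesis by (simp add: f_def)
qed

lemma prefix_excess_append_replicate:
  assumes "\<forall>j\<le>length Q. 0 \<le> prefix_excess n s Q j"
    and "0 \<le> top_sum n (sum_list Q + a * p) - of_nat (length Q + a) * s"
  shows "\<forall>j\<le>length (Q @ replicate a p). 0 \<le> prefix_excess n s (Q @ replicate a p) j"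
proof (intro allI impI)
  fix j assume j: "j \<le> length (Q @ replicate a p)"
  show "0 \<le> prefix_excess n s (Q @ replicate a p) j"
  proof (cases "j \<le> length Q")
    case True
    then show ?thesis using assms(1) by (simp add: prefix_excess_def)
  next
    case False
    then obtain i where i: "j = length Q + i" "i \<le> a"
      using j by (intro that[of "j - length Q"]) auto
    have "0 \<le> prefix_excess n s Q (length Q)"
      using assms(1) by simp
    then have "0 \<le> top_sum n (sum_list Q + i * p) - of_nat (length Q + i) * s"
      by (intro top_sum_excess_interpolate[OF \<open>i \<le> a\<close> _ assms(2)])
        (simp add: prefix_excess_def)
    then show ?thesis
      using i by (simp add: prefix_excess_def sum_list_replicate mult.commute)
  qed
qed

lemma slack_nonnegI:
  assumes "2 \<le> length P" and "\<And>j. j \<le> length P \<Longrightarrow> 0 \<le> slack_j n P j"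
  shows "0 \<le> slack n P"
  unfolding slack_def using assms by (subst Min_ge_iff) auto

lemma equitable_common_sum:
  assumes "equitable n P" and "n * (n + 1) = 2 * length P * S" and "P \<noteq> []"
  obtains A where "(\<Union>i<length P. A i) = {1..n}"
    and "\<forall>i<length P. \<forall>j<length P. i \<noteq> j \<longrightarrow> A i \<inter> A j = {}"
    and "\<forall>i<length P. card (A i) = P ! i"
    and "\<forall>i<length P. \<Sum>(A i) = S"
proof -
  obtain A where U: "(\<Union>i<length P. A i) = {1..n}"
    and D: "\<forall>i<length P. \<forall>j<length P. i \<noteq> j \<longrightarrow> A i \<inter> A j = {}"
    and C: "\<forall>i<length P. card (A i) = P ! i"
    and E: "\<forall>i<length P. \<forall>j<length P. \<Sum>(A i) = \<Sum>(A j)"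
    using assms(1) unfolding equitable_def by blast
  have pos: "0 < length P"
    using assms(3) by simp
  have fin: "finite (A i)" if "i < length P" for i
    using U that by (metis UN_I finite_atLeastAtMost finite_subset lessThan_iff subsetI)
  have "\<Sum>{1..n} = (\<Sum>i<length P. \<Sum>(A i))"
    unfolding U[symmetric] using fin D by (intro sum.UNION_disjoint) auto
  also have "\<dots> = (\<Sum>i<length P. \<Sum>(A 0))"
    by (rule sum.cong[OF refl]) (use E pos in blast)
  also have "\<dots> = length P * \<Sum>(A 0)"
    by simp
  finally have "length P * (2 * \<Sum>(A 0)) = length P * (2 * S)"
    using double_gauss_sum_from_Suc_0[of n, where 'a=nat] assms(2) by simp
  then have "\<Sum>(A 0) = S"
    using pos by simp
  then show thesis
    using that[OF U D C] E pos by metis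
qed

lemma two_element_sum_ge:
  fixes A :: "nat set"
  assumes "card A = 2" and "A \<subseteq> {..n}" and "\<Sum>A = S"
  shows "A \<subseteq> {S - n..}"
proof -
  obtain x y where A: "A = {x, y}" and "x \<noteq> y"
    using assms(1) by (auto simp: card_2_iff)
  then have "x + y = S" "x \<le> n" "y \<le> n"
    using assms(2,3) by auto
  then show ?thesis
    unfolding A by auto
qed

lemma three_element_sum_ge:
  fixes A :: "nat set"
  assumes "card A = 3" and "\<Sum>A = S" and "3 * t < S + 6"
  shows "\<exists>x\<in>A. t \<le> x"
proof (rule ccontr)
  assume small: "\<not> ?thesis"
  obtain x y z where A: "A = {x, y, z}" and "x \<noteq> y" "y \<noteq> z" "x \<noteq> z"
    using assms(1) by (auto simp: card_3_iff)
  then have "x + y + z = S"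
    using assms(2) by (simp add: add.assoc)
  moreover have "x < t" "y < t" "z < t"
    using small unfolding A by auto
  ultimately have "S + 6 \<le> 3 * t"
    using \<open>x \<noteq> y\<close> \<open>y \<noteq> z\<close> \<open>x \<noteq> z\<close> by linarith
  then show False using assms(3) by simp
qed

lemma not_equitable_by_counting:
  assumes sum: "n * (n + 1) = 2 * length P * S"
    and triple: "3 * (S - n) < S + 6"
    and count: "card {S - n..n} < 2 * count_list P 2 + count_list P 3"
  shows "\<not> equitable n P"
proof
  assume equit: "equitable n P"
  have "P \<noteq> []"
    using count by auto
  then obtain A where U: "(\<Union>i<length P. A i) = {1..n}"
    and D: "\<forall>i<length P. \<forall>j<length P. i \<noteq> j \<longrightarrow> A i \<inter> A j = {}"
    and C: "\<forall>i<length P. card (A i) = P ! i"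
    and E: "\<forall>i<length P. \<Sum>(A i) = S"
    using equitable_common_sum[OF equit sum] by blast
  define X where "X = {S - n..n}"
  define w :: "nat \<Rightarrow> nat" where "w p = (if p = 2 then 2 else if p = 3 then 1 else 0)" for p
  have sub: "A i \<subseteq> {1..n}" if "i < length P" for i
    using U that by blast
  have w_le: "w (P ! i) \<le> card (A i \<inter> X)" if i: "i < length P" for i
  proof -
    have fin: "finite (A i)"
      using sub[OF i] finite_subset by blast
    consider "P ! i = 2" | "P ! i = 3" | "P ! i \<noteq> 2" "P ! i \<noteq> 3"
      by blast
    then show ?thesis
    proof cases
      case 1
      then have "A i \<subseteq> {S - n..}"
        using C E sub[OF i] i by (intro two_element_sum_ge) auto
      then have "A i \<inter> X = A i"
        using sub[OF i] unfolding X_def by fastforce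
      then show ?thesis
        using 1 C i by (simp add: w_def)
    next
      case 2
      then obtain x where "x \<in> A i" "S - n \<le> x"
        using C E i triple three_element_sum_ge by metis
      then have "A i \<inter> X \<noteq> {}"
        using sub[OF i] unfolding X_def by fastforce
      then show ?thesis
        using 2 fin by (simp add: w_def card_gt_0_iff Suc_le_eq)
    next
      case 3
      then show ?thesis by (simp add: w_def)
    qed
  qed
  have "2 * count_list P 2 + count_list P 3 = sum_list (map w P)"
    by (induction P) (simp_all add: w_def)
  also have "\<dots> = (\<Sum>i<length P. w (P ! i))"
    by (simp add: sum_list_sum_nth atLeast0LessThan)
  also have "\<dots> \<le> (\<Sum>i<length P. card (A i \<inter> X))"
    using w_le by (rule sum_mono) simp
  also have "\<dots> = card (\<Union>i<length P. A i \<inter> X)"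
    using D by (intro card_UN_disjoint[symmetric]) (auto simp: X_def)
  also have "\<dots> \<le> card X"
    by (intro card_mono) (auto simp: X_def)
  finally show False
    using count by (simp add: X_def)
qed

lemma count_list_replicate: "count_list (replicate a x) y = (if x = y then a else 0)"
  by (induction a) auto

lemma s_val_eq:
  assumes "n * (n + 1) = 2 * k * S" and "0 < k"
  shows "s_val n k = of_nat S"
proof -
  have "(of_nat (n * (n + 1)) :: rat) = of_nat (2 * k) * of_nat S"
    using assms(1) by (metis of_nat_mult)
  then show ?thesis
    using assms(2) unfolding s_val_def by (simp add: field_simps)
qed

lemma exists_nonequitable_block_partition:
  fixes m t b z e n k S :: nat
  assumes e: "7 \<le> e"
    and k: "k = m + t + b + z" "2 \<le> k"
    and n: "n = 2 * m + 3 * t + 7 * b + z * e"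
    and S: "n * (n + 1) = 2 * k * S"
    and excess: "0 \<le> top_sum n (2 * m) - of_nat m * of_nat S"
      "0 \<le> top_sum n (2 * m + 3 * t) - of_nat (m + t) * of_nat S"
      "0 \<le> top_sum n (2 * m + 3 * t + 7 * b) - of_nat (m + t + b) * of_nat S"
    and triple: "3 * (S - n) < S + 6"
    and count: "card {S - n..n} < 2 * m + t"
  shows "\<exists>P\<in>AP n k. slack n P \<ge> 0 \<and> \<not> equitable n P"
proof
  define P where "P = replicate m 2 @ replicate t 3 @ replicate b 7 @ replicate z e"
  define s where "s = (of_nat S :: rat)"
  have len: "length P = k"
    using k by (simp add: P_def)
  have sv: "s_val n k = s"
    using s_val_eq[OF S] k(2) by (simp add: s_def)
  show "P \<in> AP n k"
    unfolding AP_def using sv len e n by (auto simp: P_def s_def sorted_append sum_list_replicate)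
  define Q1 where "Q1 = replicate m (2::nat)"
  define Q2 where "Q2 = Q1 @ replicate t 3"
  define Q3 where "Q3 = Q2 @ replicate b 7"
  have P: "P = Q3 @ replicate z e"
    by (simp add: P_def Q1_def Q2_def Q3_def)
  have base: "\<forall>j\<le>length []. 0 \<le> prefix_excess n s [] j"
    by (simp add: prefix_excess_def top_sum_def)
  have "\<forall>j\<le>length Q1. 0 \<le> prefix_excess n s Q1 j"
    using prefix_excess_append_replicate[OF base, of m 2] excess(1)
    by (simp add: Q1_def s_def sum_list_replicate mult.commute)
  then have "\<forall>j\<le>length Q2. 0 \<le> prefix_excess n s Q2 j"
    unfolding Q2_def by (rule prefix_excess_append_replicate)
      (use excess(2) in \<open>simp add: Q1_def s_def sum_list_replicate mult.commute\<close>)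
  then have "\<forall>j\<le>length Q3. 0 \<le> prefix_excess n s Q3 j"
    unfolding Q3_def by (rule prefix_excess_append_replicate)
      (use excess(3) in \<open>simp add: Q1_def Q2_def s_def sum_list_replicate mult.commute\<close>)
  then have "\<forall>j\<le>length P. 0 \<le> prefix_excess n s P j"
    unfolding P
  proof (rule prefix_excess_append_replicate)
    have "of_nat n * (of_nat n + 1) = 2 * of_nat k * s"
      using arg_cong[OF S, of "of_nat :: nat \<Rightarrow> rat"] by (simp add: s_def algebra_simps)
    then show "0 \<le> top_sum n (sum_list Q3 + z * e) - of_nat (length Q3 + z) * s"
      using n k(1) by (simp add: Q1_def Q2_def Q3_def top_sum_self sum_list_replicate algebra_simps)
  qed
  then have "\<forall>j\<le>length P. 0 \<le> slack_j n P j"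
    using len sv by (simp add: slack_j_eq_prefix_excess)
  then have "slack n P \<ge> 0"
    using len k(2) by (intro slack_nonnegI) simp_all
  moreover have "\<not> equitable n P"
  proof (rule not_equitable_by_counting)
    show "n * (n + 1) = 2 * length P * S"
      using S len by simp
    show "card {S - n..n} < 2 * count_list P 2 + count_list P 3"
      using count e by (simp add: P_def count_list_replicate)
  qed (fact triple)
  ultimately show "slack n P \<ge> 0 \<and> \<not> equitable n P" ..
qed

lemma exists_nonequitable_3k_mod6_1:
  assumes "k mod 6 = 1" and "13 \<le> k"
  shows "\<exists>P\<in>AP (3 * k) k. slack (3 * k) P \<ge> 0 \<and> \<not> equitable (3 * k) P"
proof -
  obtain c where k: "k = 6 * c + 7" and c: "1 \<le> c"
    using assms by (intro that[of "k div 6 - 1"]) presburger+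
  have c_bounds: "1 \<le> (of_nat c :: rat)" "of_nat c \<le> (of_nat c * of_nat c :: rat)"
    using c by (simp_all add: mult_right_mono)
  show ?thesis
    unfolding k
    by (rule exists_nonequitable_block_partition[where m = "4 * c + 5" and t = "c + 1" and b = c
          and z = 1 and e = 8 and S = "27 * c + 33"])
      (simp_all add: top_sum_closed algebra_simps, (use c_bounds in linarith)+)
qed

lemma exists_nonequitable_3k_mod6_3:
  assumes "k mod 6 = 3" and "15 \<le> k"
  shows "\<exists>P\<in>AP (3 * k) k. slack (3 * k) P \<ge> 0 \<and> \<not> equitable (3 * k) P"
proof -
  obtain c where k: "k = 6 * c + 9" and c: "1 \<le> c"
    using assms by (intro that[of "k div 6 - 1"]) presburger+
  have c_bounds: "1 \<le> (of_nat c :: rat)" "of_nat c \<le> (of_nat c * of_nat c :: rat)"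
    using c by (simp_all add: mult_right_mono)
  show ?thesis
    unfolding k
    by (rule exists_nonequitable_block_partition[where m = "4 * c + 6" and t = "c + 2" and b = c
          and z = 1 and e = 9 and S = "27 * c + 42"])
      (simp_all add: top_sum_closed algebra_simps, (use c_bounds in linarith)+)
qed

lemma exists_nonequitable_3k_mod6_5:
  assumes "k mod 6 = 5" and "17 \<le> k"
  shows "\<exists>P\<in>AP (3 * k) k. slack (3 * k) P \<ge> 0 \<and> \<not> equitable (3 * k) P"
proof -
  obtain c where k: "k = 6 * c + 5" and c: "2 \<le> c"
    using assms by (intro that[of "k div 6"]) presburger+
  have c_bounds: "2 \<le> (of_nat c :: rat)" "2 * of_nat c \<le> (of_nat c * of_nat c :: rat)"
    using c by (simp_all add: mult_right_mono)
  show ?thesis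
    unfolding k
    by (rule exists_nonequitable_block_partition[where m = "4 * c + 4" and t = c and b = "c + 1"
          and z = 0 and e = 7 and S = "27 * c + 24"])
      (simp_all add: top_sum_closed algebra_simps, (use c_bounds in linarith)+)
qed

lemma exists_nonequitable_3k_minus_1_mod6_1:
  assumes "k mod 6 = 1" and "25 \<le> k"
  shows "\<exists>P\<in>AP (3 * k - 1) k. slack (3 * k - 1) P \<ge> 0 \<and> \<not> equitable (3 * k - 1) P"
proof -
  obtain c where k: "k = 6 * c + 7" and c: "3 \<le> c"
    using assms by (intro that[of "k div 6 - 1"]) presburger+
  have c_bounds: "3 \<le> (of_nat c :: rat)" "3 * of_nat c \<le> (of_nat c * of_nat c :: rat)"
    using c by (simp_all add: mult_right_mono)
  show ?thesis
    unfolding k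
    by (rule exists_nonequitable_block_partition[where m = "4 * c + 6" and t = c and b = c
          and z = 1 and e = 8 and S = "27 * c + 30"])
      (simp_all add: top_sum_closed algebra_simps, (use c_bounds in linarith)+)
qed

lemma exists_nonequitable_3k_minus_1_mod6_3:
  assumes "k mod 6 = 3" and "21 \<le> k"
  shows "\<exists>P\<in>AP (3 * k - 1) k. slack (3 * k - 1) P \<ge> 0 \<and> \<not> equitable (3 * k - 1) P"
proof -
  obtain c where k: "k = 6 * c + 9" and c: "2 \<le> c"
    using assms by (intro that[of "k div 6 - 1"]) presburger+
  have c_bounds: "2 \<le> (of_nat c :: rat)" "2 * of_nat c \<le> (of_nat c * of_nat c :: rat)"
    using c by (simp_all add: mult_right_mono)
  show ?thesis
    unfolding k
    by (rule exists_nonequitable_block_partition[where m = "4 * c + 7" and t = "c + 1" and b = c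
          and z = 1 and e = 9 and S = "27 * c + 39"])
      (simp_all add: top_sum_closed algebra_simps, (use c_bounds in linarith)+)
qed

lemma exists_nonequitable_3k_minus_1_mod6_5:
  assumes "k mod 6 = 5" and "23 \<le> k"
  shows "\<exists>P\<in>AP (3 * k - 1) k. slack (3 * k - 1) P \<ge> 0 \<and> \<not> equitable (3 * k - 1) P"
proof -
  obtain c where k: "k = 6 * c + 11" and c: "2 \<le> c"
    using assms by (intro that[of "k div 6 - 1"]) presburger+
  have c_bounds: "2 \<le> (of_nat c :: rat)" "2 * of_nat c \<le> (of_nat c * of_nat c :: rat)"
    using c by (simp_all add: mult_right_mono)
  show ?thesis
    unfolding k
    by (rule exists_nonequitable_block_partition[where m = "4 * c + 9" and t = c and b = "c + 2"
          and z = 0 and e = 7 and S = "27 * c + 48"])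
      (simp_all add: top_sum_closed algebra_simps, (use c_bounds in linarith)+)
qed

theorem mainTheorem4:
  shows "(\<forall>k::nat. odd k \<and> 13 \<le> k \<longrightarrow>
            (\<exists>P\<in>AP (3*k) k. slack (3*k) P \<ge> 0 \<and> \<not> equitable (3*k) P))
       \<and> (\<forall>k::nat. odd k \<and> 21 \<le> k \<longrightarrow>
            (\<exists>P\<in>AP (3*k-1) k. slack (3*k-1) P \<ge> 0 \<and> \<not> equitable (3*k-1) P))"
proof (intro conjI allI impI)
  fix k :: nat
  assume "odd k \<and> 13 \<le> k"
  then have "k mod 6 = 1 \<and> 13 \<le> k \<or> k mod 6 = 3 \<and> 15 \<le> k \<or> k mod 6 = 5 \<and> 17 \<le> k"
    by presburger
  then show "\<exists>P\<in>AP (3*k) k. slack (3*k) P \<ge> 0 \<and> \<not> equitable (3*k) P"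
    using exists_nonequitable_3k_mod6_1 exists_nonequitable_3k_mod6_3
      exists_nonequitable_3k_mod6_5 by blast
next
  fix k :: nat
  assume "odd k \<and> 21 \<le> k"
  then have "k mod 6 = 1 \<and> 25 \<le> k \<or> k mod 6 = 3 \<and> 21 \<le> k \<or> k mod 6 = 5 \<and> 23 \<le> k"
    by presburger
  then show "\<exists>P\<in>AP (3*k-1) k. slack (3*k-1) P \<ge> 0 \<and> \<not> equitable (3*k-1) P"
    using exists_nonequitable_3k_minus_1_mod6_1 exists_nonequitable_3k_minus_1_mod6_3
      exists_nonequitable_3k_minus_1_mod6_5 by blast
qed

end
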